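(* Let $k\ge 1$. Let $G'$ be the instance with a single offline vertex $j$ and two online types, both adjacent only to $j$: - a type of arrival rate $1-\ln 2$ with edge weight $k$ (the "first-class" type); - a type of arrival rate $2\ln 2$ with edge weight $1$ (the "second-class" type). For $t_1\in[0,1]$, let Algorithm 1$(t_1)$ be the online algorithm that: - matches an arriving first-class vertex to $j$ whenever $j$ is unmatched; - matches a second-class vertex arriving at time $t$ to $j$ whenever $j$ is unmatched and $t>t_1$. Then there exists $t_1\in[0,1]$ such that Algorithm 1$(t_1)$ is an optimal online algorithm on $G'$, i.e. it maximizes the expected total matched weight among all online algorithms.
   Context: Edge-weighted online stochastic matching in the Poisson arrival model. Each online type $i$ independently arrives according to a Poisson process of rate $\lambda_i$ on the time horizon $[0,1]$. The online algorithm knows the instance in advance. On each arrival, it must immediately and irrevocably either match the arriving vertex to an unmatched offline neighbor, gaining the edge weight, or discard it. Each offline vertex is matched at most once. The objective is the expected total matched weight. *)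

theory Defs
  imports "HOL-Probability.Probability"
begin

text \<open>Instance G': one offline vertex j, two online types encoded as bool:
  True = first-class type (rate 1 - ln 2, weight k),
  False = second-class type (rate 2 ln 2, weight 1).\<close>

definition rate :: "bool \<Rightarrow> real" where
  "rate c = (if c then 1 - ln 2 else 2 * ln 2)"

definition wt :: "real \<Rightarrow> bool \<Rightarrow> real" where
  "wt k c = (if c then k else 1)"

text \<open>A realisation of the (marked) Poisson arrival process with n arrivals is given by
  arrival times t 0 < t 1 < ... < t (n-1) in (0,1) and types c 0, ..., c (n-1).
  The history seen at the arrival of the (m-1)-th vertex is the list of the first m arrivals.\<close>

definition hist :: "(nat \<Rightarrow> real) \<Rightarrow> (nat \<Rightarrow> bool) \<Rightarrow> nat \<Rightarrow> (real \<times> bool) list" where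
  "hist t c m = map (\<lambda>i. (t i, c i)) [0..<m]"

definition ordered_times :: "nat \<Rightarrow> (nat \<Rightarrow> real) \<Rightarrow> bool" where
  "ordered_times n t \<longleftrightarrow> (\<forall>i<n. 0 < t i \<and> t i < 1) \<and> (\<forall>i. Suc i < n \<longrightarrow> t i < t (Suc i))"

text \<open>A (possibly randomised) online algorithm: given the history of arrivals up to and
  including the current one (last list element), it returns the probability of matching the
  current arrival to j (provided j is still unmatched).\<close>

type_synonym online_alg = "(real \<times> bool) list \<Rightarrow> real"

definition valid_alg :: "online_alg \<Rightarrow> bool" where
  "valid_alg alg \<longleftrightarrow> (\<forall>h. 0 \<le> alg h \<and> alg h \<le> 1) \<and>
     (\<forall>n m c. m \<le> n \<longrightarrow>
        (\<lambda>t. alg (hist t c m)) \<in> borel_measurable (PiM {..<n} (\<lambda>_. lborel)))"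

definition gain :: "real \<Rightarrow> online_alg \<Rightarrow> (nat \<Rightarrow> real) \<Rightarrow> (nat \<Rightarrow> bool) \<Rightarrow> nat \<Rightarrow> real" where
  "gain k alg t c n =
     (\<Sum>m<n. wt k (c m) * alg (hist t c (Suc m)) * (\<Prod>l<m. 1 - alg (hist t c (Suc l))))"

text \<open>Expected total matched weight under the Poisson arrival model on [0,1]: the marked
  Poisson process has, for each n, Janossy density
  exp(-(sum of rates)) * prod_i rate (c i) on ordered time vectors.\<close>

definition expected_weight :: "real \<Rightarrow> online_alg \<Rightarrow> ennreal" where
  "expected_weight k alg =
     (\<Sum>n. ennreal (exp (- (rate True + rate False))) *
        (\<integral>\<^sup>+ t. indicator {t. ordered_times n t} t *
            ennreal (\<Sum>c\<in>{..<n} \<rightarrow>\<^sub>E (UNIV :: bool set).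
                       (\<Prod>i<n. rate (c i)) * gain k alg t c n)
         \<partial>(PiM {..<n} (\<lambda>_. lborel))))"

definition alg1 :: "real \<Rightarrow> online_alg" where
  "alg1 t1 h = (let (t, c) = last h in if c \<or> t1 < t then 1 else 0)"

end

theory Submission
  imports Defs
begin

text \<open>Once j is matched nothing more can be gained, so this is an optimal stopping problem.
  Let V(s) be the expected gain of the threshold rule from time s on, with j still free. After
  the threshold t1 every arrival is accepted, which is worth c (1 - exp (- \<Lambda> (1 - s))) \<le> 1,
  where \<Lambda> is the total rate and c the mean weight of an arrival; before t1 only first-class
  arrivals are accepted, which is worth k - (k - 1) exp (- \<lambda>(True) (t1 - s)) \<ge> 1. This V solves
  the Bellman equation
    V(a) = \<integral> from a to 1 of exp (- \<Lambda> (u - a)) \<Sum>(b) \<lambda>(b) max (w(b), V(u)) du.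
  Conditioning on the next arrival, an induction on the number of arrivals shows that an online
  algorithm, which at an arrival of type b at time u earns a mixture of w(b) and at most V(u),
  gets at most V(0), while Algorithm 1(t1) always takes the larger of the two and gets V(0).
  The expected weight is a series over the number of arrivals, so both inductions are carried
  out on its partial sums.\<close>

section \<open>Arrival sequences\<close>

lemma rate_pos: "0 < rate b"
  unfolding rate_def using ln_2_less_1 ln2_ge_two_thirds by auto

definition total_rate :: real where
  "total_rate = rate True + rate False"

lemma total_rate_pos: "0 < total_rate"
  unfolding total_rate_def using rate_pos by (simp add: add_pos_pos)

lemma sum_rate_ennreal:
  assumes "0 \<le> x"
  shows "(\<Sum>b\<in>UNIV. ennreal (rate b) * ennreal x) = ennreal (total_rate * x)"
proof -
  have "(\<Sum>b\<in>UNIV. ennreal (rate b) * ennreal x) = (\<Sum>b\<in>UNIV. ennreal (rate b * x))"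
    using assms rate_pos by (simp add: ennreal_mult less_imp_le)
  also have "\<dots> = ennreal (total_rate * x)"
    using assms rate_pos
    by (subst sum_ennreal) (auto simp: UNIV_bool total_rate_def algebra_simps less_imp_le)
  finally show ?thesis .
qed

abbreviation lborel_on :: "nat set \<Rightarrow> (nat \<Rightarrow> real) measure" where
  "lborel_on I \<equiv> PiM I (\<lambda>_. lborel)"

lemma (in product_sigma_finite) borel_measurable_nn_integral_fun_upd:
  assumes "finite I" and [measurable]: "f \<in> borel_measurable (PiM (insert i I) M)"
  shows "(\<lambda>y. \<integral>\<^sup>+ x. f (x(i := y)) \<partial>PiM I M) \<in> borel_measurable (M i)"
proof -
  interpret finite_product_sigma_finite M I
    by standard (rule assms(1))
  show ?thesis
    by measurable
qed

definition last_time :: "nat \<Rightarrow> (nat \<Rightarrow> real) \<Rightarrow> real" where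
  "last_time L T = (if L = 0 then 0 else T (L - 1))"

lemma last_time_fun_upd [simp]: "last_time (Suc L) (T(L := u)) = u"
  unfolding last_time_def by simp

lemma last_time_bounds: "ordered_times L T \<Longrightarrow> 0 \<le> last_time L T \<and> last_time L T < 1"
  unfolding last_time_def ordered_times_def by (cases L) auto

lemma ordered_times_cong: "(\<And>i. i < K \<Longrightarrow> t i = t' i) \<Longrightarrow> ordered_times K t = ordered_times K t'"
  unfolding ordered_times_def by (metis Suc_lessD)

lemma ordered_times_mono: "ordered_times K t \<Longrightarrow> L \<le> K \<Longrightarrow> ordered_times L t"
  unfolding ordered_times_def by auto

lemma ordered_times_0: "ordered_times 0 T"
  unfolding ordered_times_def by simp

lemma ordered_times_fun_upd:
  "ordered_times (Suc L) (T(L := u)) \<longleftrightarrow> ordered_times L T \<and> last_time L T < u \<and> u < 1"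
proof (cases L)
  case 0
  then show ?thesis unfolding ordered_times_def last_time_def by auto
next
  case (Suc m)
  have "ordered_times L (T(L := u)) = ordered_times L T"
    by (rule ordered_times_cong) simp
  then show ?thesis
    using Suc unfolding ordered_times_def last_time_def
    by (auto simp: less_Suc_eq)
qed

lemma measurable_ordered_times: "Measurable.pred (lborel_on {..<K}) (ordered_times K)"
proof -
  have "ordered_times K = (\<lambda>t. (\<forall>i\<in>{..<K}. 0 < t i \<and> t i < 1) \<and>
      (\<forall>i\<in>{..<K}. \<forall>j\<in>{..<K}. j = Suc i \<longrightarrow> t i < t j))"
    unfolding ordered_times_def by auto
  then show ?thesis
    by simp
qed

definition merge_prefix :: "nat \<Rightarrow> (nat \<Rightarrow> 'a) \<Rightarrow> (nat \<Rightarrow> 'a) \<Rightarrow> nat \<Rightarrow> 'a" where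
  "merge_prefix L T x i = (if i < L then T i else x i)"

lemma merge_prefix_0 [simp]: "merge_prefix 0 T x = x"
  by (simp add: merge_prefix_def fun_eq_iff)

lemma merge_prefix_fun_upd: "merge_prefix L T (x(L := u)) = merge_prefix (Suc L) (T(L := u)) x"
  by (auto simp: merge_prefix_def fun_eq_iff)

lemma ordered_times_merge_prefix [simp]: "ordered_times L (merge_prefix L T x) = ordered_times L T"
  by (rule ordered_times_cong) (simp add: merge_prefix_def)

lemma measurable_merge_prefix:
  "(\<lambda>x. restrict (merge_prefix L T x) {..<K}) \<in> lborel_on {L..<K} \<rightarrow>\<^sub>M lborel_on {..<K}"
proof (rule measurable_restrict)
  fix i assume "i \<in> {..<K}"
  then show "(\<lambda>x. merge_prefix L T x i) \<in> lborel_on {L..<K} \<rightarrow>\<^sub>M lborel"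
    by (cases "i < L") (auto simp: merge_prefix_def)
qed

text \<open>Measurability on \<^term>\<open>lborel_on {..<K}\<close> only constrains g on extensional functions; the
  locality clause is what allows g to be applied to arbitrary arrival sequences.\<close>

definition prefix_measurable :: "nat \<Rightarrow> ((nat \<Rightarrow> real) \<Rightarrow> real) \<Rightarrow> bool" where
  "prefix_measurable K g \<longleftrightarrow> g \<in> borel_measurable (lborel_on {..<K}) \<and>
     (\<forall>t t'. (\<forall>i<K. t i = t' i) \<longrightarrow> g t = g t')"

lemma prefix_measurable_const [simp]: "prefix_measurable K (\<lambda>_. a)"
  unfolding prefix_measurable_def by simp

lemma borel_measurable_merge_prefix:
  assumes "prefix_measurable K g"
  shows "(\<lambda>x. g (merge_prefix L T x)) \<in> borel_measurable (lborel_on {L..<K})"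
proof -
  have "g (merge_prefix L T x) = g (restrict (merge_prefix L T x) {..<K})" for x
    using assms unfolding prefix_measurable_def by auto
  moreover have "(\<lambda>x. g (restrict (merge_prefix L T x) {..<K})) \<in> borel_measurable (lborel_on {L..<K})"
    using measurable_comp[OF measurable_merge_prefix, of g] assms
    unfolding prefix_measurable_def comp_def by blast
  ultimately show ?thesis
    by simp
qed


definition gain_from :: "online_alg \<Rightarrow> real \<Rightarrow> nat \<Rightarrow> nat \<Rightarrow> (nat \<Rightarrow> real) \<Rightarrow> (nat \<Rightarrow> bool) \<Rightarrow> real" where
  "gain_from alg k L K t c = (\<Sum>m\<in>{L..<K}. wt k (c m) * alg (hist t c (Suc m)) *
     (\<Prod>l\<in>{L..<m}. 1 - alg (hist t c (Suc l))))"

lemma gain_eq_gain_from: "gain k alg t c n = gain_from alg k 0 n t c"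
  unfolding gain_def gain_from_def by (simp add: atLeast0LessThan)

lemma gain_from_empty [simp]: "gain_from alg k L L t c = 0"
  unfolding gain_from_def by simp

lemma gain_from_Suc:
  assumes "L < K"
  shows "gain_from alg k L K t c =
    wt k (c L) * alg (hist t c (Suc L)) + (1 - alg (hist t c (Suc L))) * gain_from alg k (Suc L) K t c"
proof -
  have I: "{L..<K} = insert L {Suc L..<K}"
    using assms by auto
  have step: "(\<Prod>l\<in>{L..<m}. 1 - alg (hist t c (Suc l))) =
      (1 - alg (hist t c (Suc L))) * (\<Prod>l\<in>{Suc L..<m}. 1 - alg (hist t c (Suc l)))"
    if "m \<in> {Suc L..<K}" for m
  proof -
    have "{L..<m} = insert L {Suc L..<m}"
      using that by auto
    then show ?thesis
      by simp
  qed
  have "(\<Sum>m\<in>{Suc L..<K}. wt k (c m) * alg (hist t c (Suc m)) * (\<Prod>l\<in>{L..<m}. 1 - alg (hist t c (Suc l)))) =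
      (1 - alg (hist t c (Suc L))) * (\<Sum>m\<in>{Suc L..<K}. wt k (c m) * alg (hist t c (Suc m)) *
        (\<Prod>l\<in>{Suc L..<m}. 1 - alg (hist t c (Suc l))))"
    unfolding sum_distrib_left by (rule sum.cong) (simp_all add: step)
  then show ?thesis
    unfolding gain_from_def I by simp
qed

lemma hist_cong: "(\<And>i. i < m \<Longrightarrow> t i = t' i \<and> c i = c' i) \<Longrightarrow> hist t c m = hist t' c' m"
  unfolding hist_def by simp

lemma valid_alg_bounds: "valid_alg alg \<Longrightarrow> 0 \<le> alg h \<and> alg h \<le> 1"
  unfolding valid_alg_def by auto

lemma gain_from_nonneg:
  assumes "valid_alg alg" "0 \<le> k"
  shows "0 \<le> gain_from alg k L K t c"
  unfolding gain_from_def using valid_alg_bounds[OF assms(1)] assms(2)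
  by (intro sum_nonneg mult_nonneg_nonneg prod_nonneg) (auto simp: wt_def)

lemma prefix_measurable_gain_from:
  assumes "valid_alg alg"
  shows "prefix_measurable K (\<lambda>t. gain_from alg k L K t c)"
  unfolding prefix_measurable_def
proof (intro conjI allI impI)
  have [measurable]: "(\<lambda>t. alg (hist t c (Suc m))) \<in> borel_measurable (lborel_on {..<K})" if "m < K" for m
    using assms that unfolding valid_alg_def by auto
  show "(\<lambda>t. gain_from alg k L K t c) \<in> borel_measurable (lborel_on {..<K})"
    unfolding gain_from_def by measurable
next
  fix t t' :: "nat \<Rightarrow> real" assume "\<forall>i<K. t i = t' i"
  then have "hist t c (Suc m) = hist t' c (Suc m)" if "m < K" for m
    using that by (intro hist_cong) auto
  then show "gain_from alg k L K t c = gain_from alg k L K t' c"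
    unfolding gain_from_def by (intro sum.cong prod.cong refl arg_cong2[where f = "(*)"]) auto
qed

section \<open>Conditional Janossy integrals\<close>

definition janossy :: "nat \<Rightarrow> nat \<Rightarrow> (nat \<Rightarrow> bool) \<Rightarrow>
    ((nat \<Rightarrow> real) \<Rightarrow> (nat \<Rightarrow> bool) \<Rightarrow> real) \<Rightarrow> (nat \<Rightarrow> real) \<Rightarrow> real" where
  "janossy L K C f t = indicator {t. ordered_times K t} t *
     (\<Sum>c\<in>{L..<K} \<rightarrow>\<^sub>E UNIV. (\<Prod>i\<in>{L..<K}. rate (c i)) * f t (merge_prefix L C c))"

lemma janossy_nonneg: "(\<And>t c. 0 \<le> f t c) \<Longrightarrow> 0 \<le> janossy L K C f t"
  unfolding janossy_def using rate_pos
  by (intro mult_nonneg_nonneg sum_nonneg prod_nonneg) (auto intro: less_imp_le)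

lemma prefix_measurable_janossy:
  assumes "\<And>c. prefix_measurable K (\<lambda>t. f t c)"
  shows "prefix_measurable K (janossy L K C f)"
  unfolding prefix_measurable_def
proof (intro conjI allI impI)
  have [measurable]: "(\<lambda>t. f t c) \<in> borel_measurable (lborel_on {..<K})" for c
    using assms unfolding prefix_measurable_def by blast
  have [measurable]: "Measurable.pred (lborel_on {..<K}) (ordered_times K)"
    by (rule measurable_ordered_times)
  show "janossy L K C f \<in> borel_measurable (lborel_on {..<K})"
    unfolding janossy_def[abs_def] by measurable
next
  fix t t' :: "nat \<Rightarrow> real" assume "\<forall>i<K. t i = t' i"
  moreover from this have "ordered_times K t = ordered_times K t'"
    by (intro ordered_times_cong) auto
  moreover have "f t c = f t' c" for c
    using assms \<open>\<forall>i<K. t i = t' i\<close> unfolding prefix_measurable_def by blast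
  ultimately show "janossy L K C f t = janossy L K C f t'"
    unfolding janossy_def indicator_def by simp
qed

lemma sum_PiE_insert:
  assumes "L \<notin> I"
  shows "(\<Sum>c\<in>insert L I \<rightarrow>\<^sub>E B. g c) = (\<Sum>b\<in>B. \<Sum>c\<in>I \<rightarrow>\<^sub>E B. g (c(L := b)))"
proof -
  have "(\<Sum>c\<in>insert L I \<rightarrow>\<^sub>E B. g c) = (\<Sum>p\<in>B \<times> (I \<rightarrow>\<^sub>E B). g ((\<lambda>(b, c). c(L := b)) p))"
    unfolding PiE_insert_eq
    by (subst sum.reindex) (use inj_combinator[OF assms, of "\<lambda>_. B"] in auto)
  then show ?thesis
    by (simp add: sum.cartesian_product case_prod_unfold)
qed

lemma janossy_Suc:
  assumes "L < K"
  shows "janossy L K C f t = (\<Sum>b\<in>UNIV. rate b * janossy (Suc L) K (C(L := b)) f t)"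
proof -
  have I: "{L..<K} = insert L {Suc L..<K}"
    using assms by auto
  have "(\<Sum>c\<in>{L..<K} \<rightarrow>\<^sub>E UNIV. (\<Prod>i\<in>{L..<K}. rate (c i)) * f t (merge_prefix L C c)) =
      (\<Sum>b\<in>UNIV. \<Sum>c\<in>{Suc L..<K} \<rightarrow>\<^sub>E UNIV.
         rate b * ((\<Prod>i\<in>{Suc L..<K}. rate (c i)) * f t (merge_prefix (Suc L) (C(L := b)) c)))"
    unfolding I
    by (subst sum_PiE_insert) (auto simp: merge_prefix_fun_upd prod.insert intro!: sum.cong prod.cong)
  then show ?thesis
    unfolding janossy_def I by (simp add: sum_distrib_left algebra_simps)
qed

lemma borel_measurable_janossy_merge_prefix:
  "(\<And>c. prefix_measurable K (\<lambda>t. f t c)) \<Longrightarrow>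
    (\<lambda>x. janossy L' K C f (merge_prefix L T x)) \<in> borel_measurable (lborel_on {L..<K})"
  by (intro borel_measurable_merge_prefix prefix_measurable_janossy)

definition cond_integral :: "nat \<Rightarrow> nat \<Rightarrow> (nat \<Rightarrow> real) \<Rightarrow> (nat \<Rightarrow> bool) \<Rightarrow>
    ((nat \<Rightarrow> real) \<Rightarrow> (nat \<Rightarrow> bool) \<Rightarrow> real) \<Rightarrow> ennreal" where
  "cond_integral L n T C f =
     (\<integral>\<^sup>+ x. ennreal (janossy L (L + n) C f (merge_prefix L T x)) \<partial>lborel_on {L..<L + n})"

lemma cond_integral_unordered:
  assumes "\<not> ordered_times L T"
  shows "cond_integral L n T C f = 0"
proof -
  have "\<not> ordered_times (L + n) (merge_prefix L T x)" for x
  proof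
    assume "ordered_times (L + n) (merge_prefix L T x)"
    then have "ordered_times L (merge_prefix L T x)"
      by (rule ordered_times_mono) simp
    then show False
      using assms by simp
  qed
  then show ?thesis
    unfolding cond_integral_def janossy_def by simp
qed

lemma cond_integral_0_const:
  assumes "0 \<le> a"
  shows "cond_integral L 0 T C (\<lambda>_ _. a) = (if ordered_times L T then ennreal a else 0)"
proof -
  have "janossy L (L + 0) C (\<lambda>_ _. a) (merge_prefix L T x) = (if ordered_times L T then a else 0)" for x
    unfolding janossy_def by simp
  then show ?thesis
    unfolding cond_integral_def using assms by (simp add: PiM_empty)
qed

lemma ennreal_janossy_Suc:
  assumes "L < K" and "\<And>t c. 0 \<le> f t c"
  shows "ennreal (janossy L K C f t) = (\<Sum>b\<in>UNIV. ennreal (rate b) * ennreal (janossy (Suc L) K (C(L := b)) f t))"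
  using assms rate_pos
  by (simp add: janossy_Suc janossy_nonneg ennreal_mult less_imp_le flip: sum_ennreal)

lemma cond_integral_Suc:
  assumes f: "\<And>c. prefix_measurable (L + Suc n) (\<lambda>t. f t c)" and f_nonneg: "\<And>t c. 0 \<le> f t c"
  shows "cond_integral L (Suc n) T C f =
    (\<integral>\<^sup>+ u. (\<Sum>b\<in>UNIV. ennreal (rate b) * cond_integral (Suc L) n (T(L := u)) (C(L := b)) f) \<partial>lborel)"
proof -
  interpret product_sigma_finite "\<lambda>_::nat. lborel :: real measure"
    by standard
  let ?K = "Suc (L + n)" and ?I = "{Suc L..<Suc (L + n)}"
  let ?J = "\<lambda>L' T' C' x. ennreal (janossy L' ?K C' f (merge_prefix L' T' x))"
  have I: "{L..<?K} = insert L ?I"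
    by auto
  have [measurable]: "?J L' T' C' \<in> borel_measurable (lborel_on {L'..<?K})" for L' T' C'
    using borel_measurable_janossy_merge_prefix[OF f] by simp
  then have "?J L T C \<in> borel_measurable (lborel_on (insert L ?I))"
    unfolding I[symmetric] .
  then have "cond_integral L (Suc n) T C f = (\<integral>\<^sup>+ u. \<integral>\<^sup>+ x. ?J L T C (x(L := u)) \<partial>lborel_on ?I \<partial>lborel)"
    unfolding cond_integral_def add_Suc_right I by (rule product_nn_integral_insert_rev[rotated 2]) auto
  also have "\<dots> = (\<integral>\<^sup>+ u. (\<Sum>b\<in>UNIV. ennreal (rate b) *
      \<integral>\<^sup>+ x. ?J (Suc L) (T(L := u)) (C(L := b)) x \<partial>lborel_on ?I) \<partial>lborel)"
    using f_nonneg
    by (simp add: merge_prefix_fun_upd ennreal_janossy_Suc nn_integral_sum nn_integral_cmult)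
  finally show ?thesis
    by (simp add: cond_integral_def)
qed

lemma borel_measurable_cond_integral_fun_upd:
  assumes f: "\<And>c. prefix_measurable (Suc L + n) (\<lambda>t. f t c)"
  shows "(\<lambda>u. cond_integral (Suc L) n (T(L := u)) C f) \<in> borel_measurable lborel"
proof -
  interpret product_sigma_finite "\<lambda>_::nat. lborel :: real measure"
    by standard
  let ?K = "Suc L + n" and ?I = "{Suc L..<Suc L + n}"
  have "(\<lambda>y. janossy (Suc L) ?K C f (merge_prefix L T y)) \<in> borel_measurable (lborel_on {L..<?K})"
    using f by (rule borel_measurable_janossy_merge_prefix)
  moreover have "{L..<?K} = insert L ?I"
    by auto
  ultimately have "(\<lambda>y. ennreal (janossy (Suc L) ?K C f (merge_prefix L T y)))
      \<in> borel_measurable (lborel_on (insert L ?I))"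
    by simp
  then have "(\<lambda>u. \<integral>\<^sup>+ x. ennreal (janossy (Suc L) ?K C f (merge_prefix L T (x(L := u)))) \<partial>lborel_on ?I)
      \<in> borel_measurable lborel"
    by (rule borel_measurable_nn_integral_fun_upd[OF finite_atLeastLessThan])
  then show ?thesis
    by (simp add: cond_integral_def merge_prefix_fun_upd)
qed

lemma cond_integral_cong:
  assumes "\<And>x c. f (merge_prefix L T x) (merge_prefix L C c) = g (merge_prefix L T x) (merge_prefix L C c)"
  shows "cond_integral L n T C f = cond_integral L n T C g"
  unfolding cond_integral_def janossy_def using assms by simp

lemma cond_integral_affine:
  assumes g: "\<And>c. prefix_measurable (L + n) (\<lambda>t. g t c)" and g_nonneg: "\<And>t c. 0 \<le> g t c"
    and "0 \<le> a" "0 \<le> b"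
  shows "cond_integral L n T C (\<lambda>t c. a + b * g t c) =
    ennreal a * cond_integral L n T C (\<lambda>_ _. 1) + ennreal b * cond_integral L n T C g"
proof -
  note borel_measurable_janossy_merge_prefix[of "L + n", measurable]
  have "janossy L (L + n) C (\<lambda>t c. a + b * g t c) t =
      a * janossy L (L + n) C (\<lambda>_ _. 1) t + b * janossy L (L + n) C g t" for t
    unfolding janossy_def by (simp add: sum_distrib_left sum.distrib algebra_simps)
  then have "ennreal (janossy L (L + n) C (\<lambda>t c. a + b * g t c) t) =
      ennreal a * ennreal (janossy L (L + n) C (\<lambda>_ _. 1) t) +
      ennreal b * ennreal (janossy L (L + n) C g t)" for t
    using assms janossy_nonneg[of "\<lambda>_ _. 1"] janossy_nonneg[of g]
    by (simp add: ennreal_mult ennreal_plus mult_nonneg_nonneg)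
  then show ?thesis
    unfolding cond_integral_def using g by (simp add: nn_integral_add nn_integral_cmult)
qed

lemma nn_integral_has_integral_interval:
  fixes g :: "real \<Rightarrow> real"
  assumes "(g has_integral I) {a..b}" and "\<And>u. u \<in> {a<..<b} \<Longrightarrow> 0 \<le> g u"
  shows "(\<integral>\<^sup>+ u. indicator {a<..<b} u * ennreal (g u) \<partial>lborel) = ennreal I"
proof -
  have "(g has_integral I) {a<..<b}"
    using assms(1) has_integral_open_interval[of g I a b] by simp
  from nn_integral_has_integral_lebesgue[OF assms(2) this]
  show ?thesis
    by (simp add: indicator_mult_ennreal)
qed

lemma has_integral_poisson_term:
  fixes a r :: real
  assumes "a \<le> 1"
  shows "((\<lambda>u. r * (r ^ n * (1 - u) ^ n / fact n)) has_integral
    r ^ Suc n * (1 - a) ^ Suc n / fact (Suc n)) {a..1}"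
proof -
  define c where "c = r ^ Suc n / fact (Suc n)"
  have c: "c * real (Suc n) = r * r ^ n / fact n"
    unfolding c_def by (simp del: of_nat_Suc)
  have "((\<lambda>u. - (c * (1 - u) ^ Suc n)) has_real_derivative c * real (Suc n) * (1 - x) ^ n)
      (at x within {a..1})" for x
  proof -
    have "((\<lambda>u. 1 - u) has_real_derivative -1) (at x within {a..1})"
      by (auto intro!: derivative_eq_intros)
    from DERIV_minus[OF DERIV_cmult[OF DERIV_power_Suc[OF this]], of c]
    show ?thesis
      by (simp add: algebra_simps)
  qed
  then have "((\<lambda>u. - (c * (1 - u) ^ Suc n)) has_vector_derivative r * (r ^ n * (1 - x) ^ n / fact n))
      (at x within {a..1})" for x
    unfolding c has_real_derivative_iff_has_vector_derivative by (simp add: mult.assoc)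
  from fundamental_theorem_of_calculus[OF assms this]
  show ?thesis
    by (simp add: c_def)
qed

lemma has_integral_exp_tail:
  fixes a r :: real
  assumes "a \<le> 1"
  shows "((\<lambda>u. r * exp (- r * (u - a)) * k) has_integral k * (1 - exp (- r * (1 - a)))) {a..1}"
proof -
  have "((\<lambda>u. - k * exp (- r * (u - a))) has_vector_derivative r * exp (- r * (x - a)) * k)
      (at x within {a..1})" for x
    unfolding has_real_derivative_iff_has_vector_derivative[symmetric]
    by (auto intro!: derivative_eq_intros simp: algebra_simps)
  from fundamental_theorem_of_calculus[OF assms this]
  show ?thesis
    by (simp add: algebra_simps)
qed

lemma cond_integral_one:
  "ordered_times L T \<Longrightarrow>
    cond_integral L n T C (\<lambda>_ _. 1) = ennreal (total_rate ^ n * (1 - last_time L T) ^ n / fact n)"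
proof (induction n arbitrary: L T C)
  case 0
  then show ?case
    by (simp add: cond_integral_0_const)
next
  case (Suc n)
  let ?a = "last_time L T"
  have "cond_integral L (Suc n) T C (\<lambda>_ _. 1) =
      (\<integral>\<^sup>+ u. (\<Sum>b\<in>UNIV. ennreal (rate b) * cond_integral (Suc L) n (T(L := u)) (C(L := b)) (\<lambda>_ _. 1))
        \<partial>lborel)"
    by (rule cond_integral_Suc) simp_all
  also have "\<dots> = (\<integral>\<^sup>+ u. indicator {?a<..<1} u *
      ennreal (total_rate * (total_rate ^ n * (1 - u) ^ n / fact n)) \<partial>lborel)"
  proof (rule nn_integral_cong)
    fix u
    show "(\<Sum>b\<in>UNIV. ennreal (rate b) * cond_integral (Suc L) n (T(L := u)) (C(L := b)) (\<lambda>_ _. 1)) =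
        indicator {?a<..<1} u * ennreal (total_rate * (total_rate ^ n * (1 - u) ^ n / fact n))"
    proof (cases "?a < u \<and> u < 1")
      case True
      then have "ordered_times (Suc L) (T(L := u))"
        using Suc.prems ordered_times_fun_upd by simp
      then have "cond_integral (Suc L) n (T(L := u)) C' (\<lambda>_ _. 1) =
          ennreal (total_rate ^ n * (1 - u) ^ n / fact n)" for C'
        using Suc.IH[OF \<open>ordered_times (Suc L) (T(L := u))\<close>] by (simp only: last_time_fun_upd)
      then show ?thesis
        using True total_rate_pos by (simp add: sum_rate_ennreal)
    next
      case False
      then show ?thesis
        using ordered_times_fun_upd cond_integral_unordered by simp
    qed
  qed
  also have "\<dots> = ennreal (total_rate ^ Suc n * (1 - ?a) ^ Suc n / fact (Suc n))"
    using last_time_bounds[OF Suc.prems] total_rate_pos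
    by (intro nn_integral_has_integral_interval has_integral_poisson_term) auto
  finally show ?case .
qed

section \<open>Truncated expectations\<close>

text \<open>Given the first L arrivals (T, C), the later ones form a Poisson process on
  (last_time L T, 1), whose density for n points is exp (- total_rate * (1 - last_time L T)) times
  the product of their rates. Hence \<^term>\<open>trunc_integral N L T C F\<close> is the conditional
  expectation of F n, applied to the whole arrival sequence, on the event of exactly n < N
  further arrivals.\<close>

definition trunc_integral :: "nat \<Rightarrow> nat \<Rightarrow> (nat \<Rightarrow> real) \<Rightarrow> (nat \<Rightarrow> bool) \<Rightarrow>
    (nat \<Rightarrow> (nat \<Rightarrow> real) \<Rightarrow> (nat \<Rightarrow> bool) \<Rightarrow> real) \<Rightarrow> ennreal" where
  "trunc_integral N L T C F =
     (\<Sum>n<N. ennreal (exp (- total_rate * (1 - last_time L T))) * cond_integral L n T C (F n))"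

lemma borel_measurable_trunc_integral_fun_upd:
  assumes "\<And>n c. prefix_measurable (Suc L + n) (\<lambda>t. F n t c)"
  shows "(\<lambda>u. trunc_integral N (Suc L) (T(L := u)) C F) \<in> borel_measurable lborel"
  unfolding trunc_integral_def last_time_fun_upd
  by (intro borel_measurable_sum borel_measurable_times_ennreal borel_measurable_cond_integral_fun_upd assms)
    measurable

lemma trunc_integral_Suc:
  assumes F: "\<And>n c. prefix_measurable (L + Suc n) (\<lambda>t. F (Suc n) t c)"
    and F_nonneg: "\<And>n t c. 0 \<le> F n t c"
  shows "trunc_integral (Suc N) L T C F =
    ennreal (exp (- total_rate * (1 - last_time L T))) * cond_integral L 0 T C (F 0) +
    (\<integral>\<^sup>+ u. (\<Sum>b\<in>UNIV. ennreal (rate b) * ennreal (exp (- total_rate * (u - last_time L T))) *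
       trunc_integral N (Suc L) (T(L := u)) (C(L := b)) (\<lambda>n. F (Suc n))) \<partial>lborel)"
proof -
  let ?a = "last_time L T"
  let ?e = "ennreal (exp (- total_rate * (1 - ?a)))"
  let ?G = "\<lambda>n u. \<Sum>b\<in>UNIV. ennreal (rate b) * cond_integral (Suc L) n (T(L := u)) (C(L := b)) (F (Suc n))"
  have [measurable]: "?G n \<in> borel_measurable lborel" for n
    using F by (intro borel_measurable_sum borel_measurable_times_ennreal borel_measurable_const
        borel_measurable_cond_integral_fun_upd) simp
  have "trunc_integral (Suc N) L T C F =
      ?e * cond_integral L 0 T C (F 0) + (\<Sum>n<N. ?e * cond_integral L (Suc n) T C (F (Suc n)))"
    unfolding trunc_integral_def by (simp only: sum.lessThan_Suc_shift)
  also have "(\<Sum>n<N. ?e * cond_integral L (Suc n) T C (F (Suc n))) = (\<Sum>n<N. ?e * integral\<^sup>N lborel (?G n))"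
    using F F_nonneg by (simp add: cond_integral_Suc)
  also have "\<dots> = (\<integral>\<^sup>+ u. (\<Sum>n<N. ?e * ?G n u) \<partial>lborel)"
    by (simp add: nn_integral_cmult nn_integral_sum)
  also have "\<dots> = (\<integral>\<^sup>+ u. (\<Sum>b\<in>UNIV. ennreal (rate b) * ennreal (exp (- total_rate * (u - ?a))) *
       trunc_integral N (Suc L) (T(L := u)) (C(L := b)) (\<lambda>n. F (Suc n))) \<partial>lborel)"
  proof (rule nn_integral_cong)
    fix u
    have "?e = ennreal (exp (- total_rate * (u - ?a))) * ennreal (exp (- total_rate * (1 - u)))"
      by (simp add: ennreal_mult[symmetric] mult_exp_exp algebra_simps)
    then show "(\<Sum>n<N. ?e * ?G n u) = (\<Sum>b\<in>UNIV. ennreal (rate b) * ennreal (exp (- total_rate * (u - ?a))) *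
        trunc_integral N (Suc L) (T(L := u)) (C(L := b)) (\<lambda>n. F (Suc n)))"
      unfolding trunc_integral_def last_time_fun_upd sum_distrib_left
      by (subst sum.swap) (simp add: algebra_simps)
  qed
  finally show ?thesis .
qed

definition prob_fewer_arrivals :: "nat \<Rightarrow> real \<Rightarrow> real" where
  "prob_fewer_arrivals N a =
     (\<Sum>n<N. exp (- total_rate * (1 - a)) * (total_rate ^ n * (1 - a) ^ n / fact n))"

lemma prob_fewer_arrivals_nonneg: "a \<le> 1 \<Longrightarrow> 0 \<le> prob_fewer_arrivals N a"
  unfolding prob_fewer_arrivals_def using total_rate_pos by (intro sum_nonneg) simp

lemma prob_fewer_arrivals_le_1:
  assumes "a \<le> 1"
  shows "prob_fewer_arrivals N a \<le> 1"
proof -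
  define x where "x = total_rate * (1 - a)"
  have "0 \<le> x"
    unfolding x_def using assms total_rate_pos by simp
  moreover have "(\<lambda>n. x ^ n / fact n) sums exp x"
    using exp_converges[of x] by (simp add: divide_inverse mult.commute)
  ultimately have "(\<Sum>n<N. x ^ n / fact n) \<le> exp x"
    using sum_le_suminf[of "\<lambda>n. x ^ n / fact n" "{..<N}"] by (auto simp: sums_iff)
  then have "exp (- x) * (\<Sum>n<N. x ^ n / fact n) \<le> 1"
    by (simp add: exp_minus field_simps)
  then show ?thesis
    unfolding prob_fewer_arrivals_def x_def by (simp add: sum_distrib_left power_mult_distrib)
qed

lemma prob_fewer_arrivals_tendsto_1: "(\<lambda>N. prob_fewer_arrivals N a) \<longlonglongrightarrow> 1"
proof -
  define x where "x = total_rate * (1 - a)"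
  have "(\<lambda>N. \<Sum>n<N. x ^ n / fact n) \<longlonglongrightarrow> exp x"
    using exp_converges[of x] by (simp add: sums_def divide_inverse mult.commute)
  then have "(\<lambda>N. exp (- x) * (\<Sum>n<N. x ^ n / fact n)) \<longlonglongrightarrow> exp (- x) * exp x"
    by (rule tendsto_mult_left)
  then show ?thesis
    unfolding prob_fewer_arrivals_def x_def
    by (simp add: sum_distrib_left power_mult_distrib mult_exp_exp)
qed

definition trunc_mass :: "nat \<Rightarrow> nat \<Rightarrow> (nat \<Rightarrow> real) \<Rightarrow> (nat \<Rightarrow> bool) \<Rightarrow> ennreal" where
  "trunc_mass N L T C = trunc_integral N L T C (\<lambda>_ _ _. 1)"

definition trunc_gain :: "online_alg \<Rightarrow> real \<Rightarrow> nat \<Rightarrow> nat \<Rightarrow> (nat \<Rightarrow> real) \<Rightarrow> (nat \<Rightarrow> bool) \<Rightarrow> ennreal" where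
  "trunc_gain alg k N L T C = trunc_integral N L T C (\<lambda>n. gain_from alg k L (L + n))"

lemma trunc_mass_eq:
  assumes "ordered_times L T"
  shows "trunc_mass N L T C = ennreal (prob_fewer_arrivals N (last_time L T))"
  using last_time_bounds[OF assms] total_rate_pos
  by (simp add: trunc_mass_def trunc_integral_def prob_fewer_arrivals_def cond_integral_one[OF assms]
      ennreal_mult'[symmetric] sum_ennreal)

lemma trunc_mass_Suc:
  assumes "ordered_times L T"
  shows "trunc_mass (Suc N) L T C = ennreal (exp (- total_rate * (1 - last_time L T))) +
    (\<integral>\<^sup>+ u. (\<Sum>b\<in>UNIV. ennreal (rate b) * ennreal (exp (- total_rate * (u - last_time L T))) *
       trunc_mass N (Suc L) (T(L := u)) (C(L := b))) \<partial>lborel)"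
  unfolding trunc_mass_def using assms
  by (subst trunc_integral_Suc) (simp_all add: cond_integral_0_const)

lemma borel_measurable_trunc_mass_fun_upd:
  "(\<lambda>u. trunc_mass N (Suc L) (T(L := u)) C) \<in> borel_measurable lborel"
  unfolding trunc_mass_def by (intro borel_measurable_trunc_integral_fun_upd) simp

lemma borel_measurable_trunc_gain_fun_upd:
  "valid_alg alg \<Longrightarrow> (\<lambda>u. trunc_gain alg k N (Suc L) (T(L := u)) C) \<in> borel_measurable lborel"
  unfolding trunc_gain_def by (intro borel_measurable_trunc_integral_fun_upd prefix_measurable_gain_from)

lemma cond_integral_gain_from_Suc:
  assumes alg: "valid_alg alg" and "0 \<le> k"
  shows "cond_integral (Suc L) n T C (gain_from alg k L (L + Suc n)) =
    ennreal (wt k (C L) * alg (hist T C (Suc L))) * cond_integral (Suc L) n T C (\<lambda>_ _. 1) +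
    ennreal (1 - alg (hist T C (Suc L))) * cond_integral (Suc L) n T C (gain_from alg k (Suc L) (Suc L + n))"
proof -
  let ?p = "alg (hist T C (Suc L))"
  have "gain_from alg k L (L + Suc n) (merge_prefix (Suc L) T x) (merge_prefix (Suc L) C c) =
      wt k (C L) * ?p +
      (1 - ?p) * gain_from alg k (Suc L) (Suc L + n) (merge_prefix (Suc L) T x) (merge_prefix (Suc L) C c)"
    for x c
  proof -
    have "hist (merge_prefix (Suc L) T x) (merge_prefix (Suc L) C c) (Suc L) = hist T C (Suc L)"
      by (rule hist_cong) (simp add: merge_prefix_def)
    then show ?thesis
      by (simp add: gain_from_Suc merge_prefix_def)
  qed
  then have "cond_integral (Suc L) n T C (gain_from alg k L (L + Suc n)) =
      cond_integral (Suc L) n T C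
        (\<lambda>t c. wt k (C L) * ?p + (1 - ?p) * gain_from alg k (Suc L) (Suc L + n) t c)"
    by (rule cond_integral_cong)
  also have "\<dots> = ennreal (wt k (C L) * ?p) * cond_integral (Suc L) n T C (\<lambda>_ _. 1) +
      ennreal (1 - ?p) * cond_integral (Suc L) n T C (gain_from alg k (Suc L) (Suc L + n))"
    using valid_alg_bounds[OF alg] assms(2)
    by (intro cond_integral_affine prefix_measurable_gain_from gain_from_nonneg alg) (auto simp: wt_def)
  finally show ?thesis .
qed

lemma trunc_gain_Suc:
  fixes T :: "nat \<Rightarrow> real" and C :: "nat \<Rightarrow> bool" and L :: nat
  assumes alg: "valid_alg alg" and "0 \<le> k"
  defines "p \<equiv> \<lambda>u b. alg (hist (T(L := u)) (C(L := b)) (Suc L))"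
  shows "trunc_gain alg k (Suc N) L T C =
    (\<integral>\<^sup>+ u. (\<Sum>b\<in>UNIV. ennreal (rate b) * ennreal (exp (- total_rate * (u - last_time L T))) *
       (ennreal (wt k b * p u b) * trunc_mass N (Suc L) (T(L := u)) (C(L := b)) +
        ennreal (1 - p u b) * trunc_gain alg k N (Suc L) (T(L := u)) (C(L := b)))) \<partial>lborel)"
proof -
  have "gain_from alg k L (L + 0) = (\<lambda>_ _. 0)"
    by (simp add: fun_eq_iff)
  then have "cond_integral L 0 T C (gain_from alg k L (L + 0)) = 0"
    using cond_integral_0_const[of 0 L T C] by simp
  moreover have "trunc_integral N (Suc L) (T(L := u)) (C(L := b)) (\<lambda>n. gain_from alg k L (L + Suc n)) =
      ennreal (wt k b * p u b) * trunc_mass N (Suc L) (T(L := u)) (C(L := b)) +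
      ennreal (1 - p u b) * trunc_gain alg k N (Suc L) (T(L := u)) (C(L := b))" for u b
    unfolding trunc_integral_def trunc_mass_def trunc_gain_def p_def
      cond_integral_gain_from_Suc[OF assms(1,2)]
    by (simp add: sum_distrib_left sum.distrib algebra_simps)
  ultimately show ?thesis
    unfolding trunc_gain_def using assms(1,2)
    by (subst trunc_integral_Suc) (simp_all add: prefix_measurable_gain_from gain_from_nonneg)
qed

lemma expected_weight_eq_SUP: "expected_weight k alg = (SUP N. trunc_gain alg k N 0 T C)"
proof -
  have "ennreal (exp (- (rate True + rate False))) *
      (\<integral>\<^sup>+ t. indicator {t. ordered_times n t} t *
        ennreal (\<Sum>c\<in>{..<n} \<rightarrow>\<^sub>E UNIV. (\<Prod>i<n. rate (c i)) * gain k alg t c n)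
        \<partial>lborel_on {..<n}) =
      ennreal (exp (- total_rate * (1 - last_time 0 T))) *
      cond_integral 0 n T C (gain_from alg k 0 (0 + n))" for n
    by (simp add: cond_integral_def janossy_def total_rate_def last_time_def gain_eq_gain_from
        atLeast0LessThan indicator_mult_ennreal)
  then show ?thesis
    unfolding expected_weight_def trunc_gain_def trunc_integral_def by (simp only: suminf_eq_SUP)
qed

section \<open>The value function\<close>

definition mean_weight :: "real \<Rightarrow> real" where
  "mean_weight k = (rate True * k + rate False) / total_rate"

definition accept_all_value :: "real \<Rightarrow> real \<Rightarrow> real" where
  "accept_all_value k s = mean_weight k * (1 - exp (- total_rate * (1 - s)))"

text \<open>\<^term>\<open>accept_all_value k\<close> decreases to 0 at time 1. The threshold is the time from which it
  is at most 1, the weight of a second-class arrival: its root in (0, 1) if there is one, else 0.\<close>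

definition threshold :: "real \<Rightarrow> real" where
  "threshold k = (if mean_weight k * (1 - exp (- total_rate)) \<le> 1 then 0
     else 1 + ln (1 - 1 / mean_weight k) / total_rate)"

text \<open>Before the threshold only first-class arrivals are accepted, so the value V solves
  V' = rate True * (V - k) with V (threshold k) = 1.\<close>

definition reserve_value :: "real \<Rightarrow> real \<Rightarrow> real" where
  "reserve_value k s = k - (k - 1) * exp (- rate True * (threshold k - s))"

definition opt_value :: "real \<Rightarrow> real \<Rightarrow> real" where
  "opt_value k s = (if s < threshold k then reserve_value k s else accept_all_value k s)"

definition arrival_value :: "real \<Rightarrow> real \<Rightarrow> real" where
  "arrival_value k u = (\<Sum>b\<in>UNIV. rate b * max (wt k b) (opt_value k u))"

lemma mean_weight_pos: "0 \<le> k \<Longrightarrow> 0 < mean_weight k"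
  unfolding mean_weight_def using rate_pos total_rate_pos
  by (intro divide_pos_pos add_nonneg_pos mult_nonneg_nonneg) (auto intro: less_imp_le)

lemma accept_all_value_antimono: "0 \<le> k \<Longrightarrow> s \<le> s' \<Longrightarrow> accept_all_value k s' \<le> accept_all_value k s"
  unfolding accept_all_value_def using mean_weight_pos total_rate_pos
  by (intro mult_left_mono) (auto intro: less_imp_le)

lemma accept_all_value_nonneg: "0 \<le> k \<Longrightarrow> s \<le> 1 \<Longrightarrow> 0 \<le> accept_all_value k s"
  unfolding accept_all_value_def using mean_weight_pos total_rate_pos
  by (intro mult_nonneg_nonneg) (auto intro: less_imp_le)

lemma threshold_pos:
  assumes "0 \<le> k" "0 < threshold k"
  shows "threshold k < 1" and "accept_all_value k (threshold k) = 1"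
proof -
  have big: "1 < mean_weight k * (1 - exp (- total_rate))" and
    t: "threshold k = 1 + ln (1 - 1 / mean_weight k) / total_rate"
    using assms(2) unfolding threshold_def by (auto split: if_splits)
  have "mean_weight k * (1 - exp (- total_rate)) \<le> mean_weight k"
    using mean_weight_pos[OF assms(1)] by (intro mult_left_le) auto
  then have c: "1 < mean_weight k"
    using big by simp
  then have "0 < 1 - 1 / mean_weight k" "1 - 1 / mean_weight k < 1"
    by auto
  then show "threshold k < 1"
    unfolding t using total_rate_pos by (simp add: divide_neg_pos)
  have "exp (- total_rate * (1 - threshold k)) = 1 - 1 / mean_weight k"
    unfolding t using total_rate_pos \<open>0 < 1 - 1 / mean_weight k\<close> by simp
  then show "accept_all_value k (threshold k) = 1"
    unfolding accept_all_value_def using c by (simp add: field_simps)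
qed

lemma threshold_pos_iff:
  assumes "0 \<le> k"
  shows "0 < threshold k \<longleftrightarrow> 1 < mean_weight k * (1 - exp (- total_rate))"
proof (cases "mean_weight k * (1 - exp (- total_rate)) \<le> 1")
  case False
  have "1 / mean_weight k < 1 - exp (- total_rate)"
    using False mean_weight_pos[OF assms] by (simp add: divide_less_eq mult.commute)
  then have "ln (exp (- total_rate)) < ln (1 - 1 / mean_weight k)"
    using exp_gt_zero[of "- total_rate"] by (subst ln_less_cancel_iff) linarith+
  then have "-1 < ln (1 - 1 / mean_weight k) / total_rate"
    using total_rate_pos by (simp add: less_divide_eq)
  then show ?thesis
    unfolding threshold_def using False by simp
qed (simp add: threshold_def)

lemma threshold_bounds: "0 \<le> k \<Longrightarrow> 0 \<le> threshold k \<and> threshold k < 1"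
  using threshold_pos_iff[of k] threshold_pos(1)[of k] unfolding threshold_def
  by (cases "0 < threshold k") (auto split: if_splits)

lemma accept_all_value_le_1:
  assumes "0 \<le> k" "threshold k \<le> s"
  shows "accept_all_value k s \<le> 1"
proof (cases "0 < threshold k")
  case True
  then show ?thesis
    using accept_all_value_antimono[OF assms] threshold_pos(2)[OF assms(1)] by simp
next
  case False
  then have "mean_weight k * (1 - exp (- total_rate)) \<le> 1"
    using threshold_pos_iff[OF assms(1)] by simp
  then have "accept_all_value k 0 \<le> 1"
    unfolding accept_all_value_def by simp
  then show ?thesis
    using accept_all_value_antimono[of k 0 s] assms False threshold_bounds[of k] by simp
qed

context
  fixes k :: real
  assumes k: "1 \<le> k"
begin

lemma reserve_value_bounds:
  assumes "s \<le> threshold k"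
  shows "1 \<le> reserve_value k s \<and> reserve_value k s \<le> k"
proof -
  have "exp (- rate True * (threshold k - s)) \<le> 1"
    using assms rate_pos[of True] by (simp add: mult_nonneg_nonneg)
  then have "(k - 1) * exp (- rate True * (threshold k - s)) \<le> k - 1"
    using k by (intro mult_left_le) auto
  moreover have "0 \<le> (k - 1) * exp (- rate True * (threshold k - s))"
    using k by simp
  ultimately show ?thesis
    unfolding reserve_value_def by auto
qed

lemma opt_value_bounds: "s \<le> 1 \<Longrightarrow> 0 \<le> opt_value k s \<and> opt_value k s \<le> k"
  using reserve_value_bounds[of s] accept_all_value_le_1[of k s] accept_all_value_nonneg[of k s] k
  unfolding opt_value_def by auto

lemma opt_value_before_threshold: "s < threshold k \<Longrightarrow> 1 \<le> opt_value k s"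
  using reserve_value_bounds unfolding opt_value_def by auto

lemma opt_value_after_threshold: "threshold k \<le> s \<Longrightarrow> opt_value k s \<le> 1"
  using accept_all_value_le_1 k unfolding opt_value_def by auto

lemma arrival_value_eq:
  assumes "s \<le> 1"
  shows "arrival_value k s =
    rate True * k + rate False * (if s < threshold k then reserve_value k s else 1)"
proof -
  have "max k (opt_value k s) = k"
    using opt_value_bounds[OF assms] by simp
  moreover have "max 1 (opt_value k s) = (if s < threshold k then reserve_value k s else 1)"
    using opt_value_before_threshold[of s] opt_value_after_threshold[of s] unfolding opt_value_def by auto
  ultimately show ?thesis
    unfolding arrival_value_def wt_def by (simp add: UNIV_bool)
qed

lemma has_integral_arrival_value_after_threshold:
  assumes "threshold k \<le> a" "a \<le> 1"
  shows "((\<lambda>u. exp (- total_rate * u) * arrival_value k u) has_integral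
    exp (- total_rate * a) * accept_all_value k a) {a..1}"
proof -
  define f where "f s = - mean_weight k * (exp (- total_rate * s) - exp (- total_rate))" for s
  have H: "arrival_value k x = mean_weight k * total_rate" if "x \<in> {a..1}" for x
    using that assms total_rate_pos arrival_value_eq[of x] by (simp add: mean_weight_def)
  have "(f has_vector_derivative exp (- total_rate * x) * arrival_value k x) (at x within {a..1})"
    if "x \<in> {a..1}" for x
    unfolding f_def H[OF that] has_real_derivative_iff_has_vector_derivative[symmetric]
    by (auto intro!: derivative_eq_intros simp: algebra_simps)
  from fundamental_theorem_of_calculus[OF assms(2) this]
  show ?thesis
    unfolding f_def accept_all_value_def by (simp add: algebra_simps flip: exp_add)
qed

lemma has_integral_arrival_value_before_threshold:
  assumes "a \<le> threshold k"
  shows "((\<lambda>u. exp (- total_rate * u) * arrival_value k u) has_integral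
    exp (- total_rate * a) * reserve_value k a - exp (- total_rate * threshold k)) {a..threshold k}"
proof -
  define f where "f s = - (exp (- total_rate * s) * reserve_value k s)" for s
  have H: "arrival_value k x = rate True * k + rate False * reserve_value k x" if "x \<in> {a..threshold k}" for x
    using that threshold_bounds[of k] k arrival_value_eq[of x]
    by (cases "x < threshold k") (auto simp: reserve_value_def)
  have "(f has_vector_derivative exp (- total_rate * x) * arrival_value k x) (at x within {a..threshold k})"
    if "x \<in> {a..threshold k}" for x
    unfolding f_def reserve_value_def H[OF that] has_real_derivative_iff_has_vector_derivative[symmetric]
    by (auto intro!: derivative_eq_intros simp: algebra_simps total_rate_def)
  from fundamental_theorem_of_calculus[OF assms this]
  show ?thesis
    unfolding f_def by (simp add: reserve_value_def)
qed

lemma opt_value_bellman: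
  assumes "0 \<le> a" "a \<le> 1"
  shows "((\<lambda>u. exp (- total_rate * (u - a)) * arrival_value k u) has_integral opt_value k a) {a..1}"
proof -
  have "((\<lambda>u. exp (- total_rate * u) * arrival_value k u) has_integral
      exp (- total_rate * a) * opt_value k a) {a..1}"
  proof (cases "a < threshold k")
    case True
    then have "accept_all_value k (threshold k) = 1"
      using assms k by (intro threshold_pos) auto
    moreover have "((\<lambda>u. exp (- total_rate * u) * arrival_value k u) has_integral
        (exp (- total_rate * a) * reserve_value k a - exp (- total_rate * threshold k)) +
        exp (- total_rate * threshold k) * accept_all_value k (threshold k)) {a..1}"
      by (rule has_integral_combine[OF _ _ has_integral_arrival_value_before_threshold
          has_integral_arrival_value_after_threshold]) (use True threshold_bounds[of k] k in auto)
    ultimately show ?thesis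
      using True unfolding opt_value_def by simp
  next
    case False
    then show ?thesis
      using has_integral_arrival_value_after_threshold[of a] assms unfolding opt_value_def by simp
  qed
  from has_integral_mult_right[OF this, of "exp (total_rate * a)"]
  have "((\<lambda>u. (exp (total_rate * a) * exp (- total_rate * u)) * arrival_value k u) has_integral
      (exp (total_rate * a) * exp (- total_rate * a)) * opt_value k a) {a..1}"
    by (simp only: mult.assoc)
  moreover have "exp (total_rate * a) * exp (- total_rate * u) = exp (- total_rate * (u - a))" for u
    by (simp add: algebra_simps flip: exp_add)
  ultimately show ?thesis
    by (simp flip: exp_add)
qed

end

lemma borel_measurable_arrival_value: "arrival_value k \<in> borel_measurable lborel"
  unfolding arrival_value_def[abs_def] opt_value_def reserve_value_def accept_all_value_def
  by measurable

lemma arrival_value_nonneg: "0 \<le> k \<Longrightarrow> 0 \<le> arrival_value k u"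
  unfolding arrival_value_def using rate_pos
  by (intro sum_nonneg mult_nonneg_nonneg) (auto intro: less_imp_le max.coboundedI1 simp: wt_def)

lemma ennreal_arrival_value:
  assumes "0 \<le> y" "0 \<le> k"
  shows "ennreal (y * arrival_value k u) =
    (\<Sum>b\<in>UNIV. ennreal (rate b) * ennreal y * ennreal (max (wt k b) (opt_value k u)))"
proof -
  have "0 \<le> max (wt k b) (opt_value k u)" for b
    using assms(2) by (simp add: wt_def max.coboundedI1)
  then show ?thesis
    unfolding arrival_value_def using assms rate_pos
    by (simp add: sum_distrib_left ennreal_mult less_imp_le mult_nonneg_nonneg algebra_simps
        flip: sum_ennreal)
qed

section \<open>Optimality of the threshold rule\<close>

lemma alg1_hist: "alg1 t1 (hist T C (Suc m)) = (if C m \<or> t1 < T m then 1 else 0)"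
  unfolding alg1_def hist_def by simp

lemma valid_alg_alg1: "valid_alg (alg1 t1)"
  unfolding valid_alg_def
proof (intro conjI allI impI)
  fix h :: "(real \<times> bool) list"
  show "0 \<le> alg1 t1 h" "alg1 t1 h \<le> 1"
    unfolding alg1_def by (auto split: prod.splits)
next
  fix n m :: nat and c :: "nat \<Rightarrow> bool"
  assume "m \<le> n"
  show "(\<lambda>t. alg1 t1 (hist t c m)) \<in> borel_measurable (lborel_on {..<n})"
  proof (cases m)
    case 0
    then show ?thesis
      by (simp add: hist_def)
  next
    case (Suc m')
    then have [measurable]: "(\<lambda>t. t m') \<in> borel_measurable (lborel_on {..<n})"
      using \<open>m \<le> n\<close> by simp
    show ?thesis
      unfolding Suc alg1_hist by measurable
  qed
qed

lemma opt_value_greedy: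
  assumes k: "1 \<le> k" and u: "0 < u" "u \<le> 1"
  shows "max (wt k b) (opt_value k u) = (if b \<or> threshold k < u then wt k b else opt_value k u)"
proof (cases "u = threshold k")
  case True
  then have "opt_value k u = 1"
    using threshold_pos(2)[of k] k u unfolding opt_value_def by simp
  then show ?thesis
    using k True by (simp add: wt_def)
next
  case False
  then show ?thesis
    using opt_value_bounds[OF k u(2)] opt_value_before_threshold[OF k, of u]
      opt_value_after_threshold[OF k, of u]
    by (auto simp: wt_def)
qed

lemma mixture_le_max:
  fixes M W :: ennreal
  assumes "0 \<le> p" "p \<le> 1" "0 \<le> w" "0 \<le> v" "M \<le> 1" "W \<le> ennreal v"
  shows "ennreal (w * p) * M + ennreal (1 - p) * W \<le> ennreal (max w v)"
proof -
  have "ennreal (w * p) * M + ennreal (1 - p) * W \<le> ennreal (w * p) * 1 + ennreal (1 - p) * ennreal v"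
    using assms by (intro add_mono mult_left_mono) auto
  also have "\<dots> = ennreal (w * p + (1 - p) * v)"
    using assms by (simp add: ennreal_mult ennreal_plus)
  also have "\<dots> \<le> ennreal (max w v)"
  proof (rule ennreal_leI)
    have "w * p + (1 - p) * v \<le> max w v * p + (1 - p) * max w v"
      using assms by (intro add_mono mult_right_mono mult_left_mono) auto
    then show "w * p + (1 - p) * v \<le> max w v"
      by (simp add: algebra_simps)
  qed
  finally show ?thesis .
qed

lemma trunc_gain_integrand_le:
  fixes T :: "nat \<Rightarrow> real" and C :: "nat \<Rightarrow> bool" and L :: nat
  assumes alg: "valid_alg alg" and k: "1 \<le> k" and L: "ordered_times L T"
    and IH: "\<And>C'. ordered_times (Suc L) (T(L := u)) \<Longrightarrow>
      trunc_gain alg k N (Suc L) (T(L := u)) C' \<le> ennreal (opt_value k u)"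
  defines "y \<equiv> exp (- total_rate * (u - last_time L T))"
    and "p \<equiv> \<lambda>b. alg (hist (T(L := u)) (C(L := b)) (Suc L))"
  shows "(\<Sum>b\<in>UNIV. ennreal (rate b) * ennreal y *
      (ennreal (wt k b * p b) * trunc_mass N (Suc L) (T(L := u)) (C(L := b)) +
       ennreal (1 - p b) * trunc_gain alg k N (Suc L) (T(L := u)) (C(L := b)))) \<le>
    indicator {last_time L T<..<1} u * ennreal (y * arrival_value k u)"
proof (cases "last_time L T < u \<and> u < 1")
  case True
  then have u: "ordered_times (Suc L) (T(L := u))"
    using L ordered_times_fun_upd by simp
  have "ennreal (wt k b * p b) * trunc_mass N (Suc L) (T(L := u)) (C(L := b)) +
      ennreal (1 - p b) * trunc_gain alg k N (Suc L) (T(L := u)) (C(L := b)) \<le>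
      ennreal (max (wt k b) (opt_value k u))" for b
    using valid_alg_bounds[OF alg] k True opt_value_bounds[OF k, of u]
      prob_fewer_arrivals_le_1[of u N] IH[OF u]
    by (intro mixture_le_max) (auto simp: trunc_mass_eq[OF u] wt_def p_def)
  then show ?thesis
    using True k by (simp add: y_def ennreal_arrival_value sum_mono mult_left_mono)
next
  case False
  then have "\<not> ordered_times (Suc L) (T(L := u))"
    using ordered_times_fun_upd by simp
  then show ?thesis
    by (simp add: trunc_mass_def trunc_gain_def trunc_integral_def cond_integral_unordered)
qed

lemma trunc_gain_le_opt_value:
  assumes alg: "valid_alg alg" and k: "1 \<le> k"
  shows "ordered_times L T \<Longrightarrow> trunc_gain alg k N L T C \<le> ennreal (opt_value k (last_time L T))"
proof (induction N arbitrary: L T C)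
  case 0
  then show ?case
    by (simp add: trunc_gain_def trunc_integral_def)
next
  case (Suc N)
  let ?a = "last_time L T"
  have "trunc_gain alg k (Suc N) L T C \<le>
      (\<integral>\<^sup>+ u. indicator {?a<..<1} u * ennreal (exp (- total_rate * (u - ?a)) * arrival_value k u) \<partial>lborel)"
    unfolding trunc_gain_Suc[OF alg order_trans[OF zero_le_one k]]
    by (intro nn_integral_mono trunc_gain_integrand_le alg k Suc.prems) (metis Suc.IH last_time_fun_upd)
  also have "\<dots> = ennreal (opt_value k ?a)"
    using last_time_bounds[OF Suc.prems] k arrival_value_nonneg[of k]
    by (intro nn_integral_has_integral_interval opt_value_bellman) auto
  finally show ?case .
qed

lemma threshold_rule_step:
  fixes W :: "bool \<Rightarrow> ennreal"
  assumes k: "1 \<le> k" and u: "0 < u" "u \<le> 1" and "0 \<le> y" and m: "0 \<le> m" "m \<le> 1"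
    and IH: "\<And>b. ennreal (opt_value k u) + ennreal k * ennreal m \<le> W b + ennreal k"
  defines "p \<equiv> \<lambda>b. if b \<or> threshold k < u then 1 else 0 :: real"
  shows "ennreal (y * arrival_value k u) + ennreal k * (\<Sum>b\<in>UNIV. ennreal (rate b) * ennreal y * ennreal m) \<le>
    (\<Sum>b\<in>UNIV. ennreal (rate b) * ennreal y * (ennreal (wt k b * p b) * ennreal m + ennreal (1 - p b) * W b)) +
    ennreal (total_rate * y * k)"
proof -
  have "ennreal (max (wt k b) (opt_value k u)) + ennreal k * ennreal m \<le>
      ennreal (wt k b * p b) * ennreal m + ennreal (1 - p b) * W b + ennreal k" for b
  proof (cases "b \<or> threshold k < u")
    case True
    have "0 \<le> (k - wt k b) * (1 - m)"
      using k m by (intro mult_nonneg_nonneg) (auto simp: wt_def)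
    then have "wt k b + k * m \<le> wt k b * m + k"
      by (simp add: algebra_simps)
    then show ?thesis
      using True k m opt_value_greedy[OF k u, of b]
      by (simp add: p_def wt_def ennreal_mult[symmetric] ennreal_plus[symmetric] ennreal_leI
          del: ennreal_plus)
  next
    case False
    then show ?thesis
      using IH[of b] opt_value_greedy[OF k u, of b] by (simp add: p_def)
  qed
  then have "(\<Sum>b\<in>UNIV. ennreal (rate b) * ennreal y *
        (ennreal (max (wt k b) (opt_value k u)) + ennreal k * ennreal m)) \<le>
      (\<Sum>b\<in>UNIV. ennreal (rate b) * ennreal y *
        (ennreal (wt k b * p b) * ennreal m + ennreal (1 - p b) * W b + ennreal k))"
    by (intro sum_mono mult_left_mono) auto
  moreover have "ennreal (total_rate * y * k) = (\<Sum>b\<in>UNIV. ennreal (rate b) * ennreal y * ennreal k)"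
    using sum_rate_ennreal[of "y * k"] \<open>0 \<le> y\<close> k by (simp add: ennreal_mult mult.assoc)
  ultimately show ?thesis
    using \<open>0 \<le> y\<close> k
    by (simp add: ennreal_arrival_value sum_distrib_left sum.distrib distrib_left algebra_simps)
qed

lemma threshold_rule_integrand_le:
  fixes T :: "nat \<Rightarrow> real" and C :: "nat \<Rightarrow> bool" and L :: nat
  assumes k: "1 \<le> k" and L: "ordered_times L T"
    and IH: "\<And>C'. ordered_times (Suc L) (T(L := u)) \<Longrightarrow>
      ennreal (opt_value k u) + ennreal k * trunc_mass N (Suc L) (T(L := u)) C' \<le>
      trunc_gain (alg1 (threshold k)) k N (Suc L) (T(L := u)) C' + ennreal k"
  defines "I \<equiv> indicator {last_time L T<..<1} u :: ennreal"
    and "y \<equiv> exp (- total_rate * (u - last_time L T))"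
    and "M \<equiv> \<lambda>b. trunc_mass N (Suc L) (T(L := u)) (C(L := b))"
    and "W \<equiv> \<lambda>b. trunc_gain (alg1 (threshold k)) k N (Suc L) (T(L := u)) (C(L := b))"
    and "P \<equiv> \<lambda>b. if b \<or> threshold k < u then 1 else 0 :: real"
  shows "I * ennreal (y * arrival_value k u) + ennreal k * (\<Sum>b\<in>UNIV. ennreal (rate b) * ennreal y * M b) \<le>
    (\<Sum>b\<in>UNIV. ennreal (rate b) * ennreal y * (ennreal (wt k b * P b) * M b + ennreal (1 - P b) * W b)) +
    I * ennreal (total_rate * y * k)"
proof (cases "last_time L T < u \<and> u < 1")
  case True
  then have u: "ordered_times (Suc L) (T(L := u))"
    using L ordered_times_fun_upd by simp
  have "M b = ennreal (prob_fewer_arrivals N u)" for b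
    unfolding M_def trunc_mass_eq[OF u] by simp
  moreover have "ennreal (opt_value k u) + ennreal k * ennreal (prob_fewer_arrivals N u) \<le> W b + ennreal k"
    for b
    using IH[OF u, of "C(L := b)"] unfolding W_def trunc_mass_eq[OF u] last_time_fun_upd .
  ultimately show ?thesis
    using True last_time_bounds[OF L] k prob_fewer_arrivals_nonneg[of u N] prob_fewer_arrivals_le_1[of u N]
    unfolding I_def P_def by (simp add: y_def threshold_rule_step)
next
  case False
  then have "\<not> ordered_times (Suc L) (T(L := u))"
    using ordered_times_fun_upd by simp
  then show ?thesis
    using False by (simp add: I_def M_def trunc_mass_def trunc_integral_def cond_integral_unordered)
qed

lemma opt_value_add_trunc_mass_Suc:
  assumes k: "1 \<le> k" and L: "ordered_times L T"
  shows "ennreal (opt_value k (last_time L T)) + ennreal k * trunc_mass (Suc N) L T C =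
    ennreal (k * exp (- total_rate * (1 - last_time L T))) +
    (\<integral>\<^sup>+ u. indicator {last_time L T<..<1} u *
       ennreal (exp (- total_rate * (u - last_time L T)) * arrival_value k u) +
     ennreal k * (\<Sum>b\<in>UNIV. ennreal (rate b) * ennreal (exp (- total_rate * (u - last_time L T))) *
       trunc_mass N (Suc L) (T(L := u)) (C(L := b))) \<partial>lborel)"
proof -
  note borel_measurable_arrival_value[measurable] borel_measurable_trunc_mass_fun_upd[measurable]
  have "ennreal (opt_value k (last_time L T)) = (\<integral>\<^sup>+ u. indicator {last_time L T<..<1} u *
      ennreal (exp (- total_rate * (u - last_time L T)) * arrival_value k u) \<partial>lborel)"
    using last_time_bounds[OF L] k arrival_value_nonneg[of k]
    by (intro nn_integral_has_integral_interval[symmetric] opt_value_bellman) auto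
  then show ?thesis
    using k by (simp add: trunc_mass_Suc[OF L] nn_integral_add nn_integral_cmult distrib_left
        ennreal_mult algebra_simps)
qed

lemma trunc_gain_threshold_add_Suc:
  assumes k: "1 \<le> k" and L: "ordered_times L T"
  shows "trunc_gain (alg1 (threshold k)) k (Suc N) L T C + ennreal k =
    ennreal (k * exp (- total_rate * (1 - last_time L T))) +
    (\<integral>\<^sup>+ u. (\<Sum>b\<in>UNIV. ennreal (rate b) * ennreal (exp (- total_rate * (u - last_time L T))) *
       (ennreal (wt k b * (if b \<or> threshold k < u then 1 else 0)) *
          trunc_mass N (Suc L) (T(L := u)) (C(L := b)) +
        ennreal (1 - (if b \<or> threshold k < u then 1 else 0)) *
          trunc_gain (alg1 (threshold k)) k N (Suc L) (T(L := u)) (C(L := b)))) +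
     indicator {last_time L T<..<1} u * ennreal (total_rate * exp (- total_rate * (u - last_time L T)) * k)
     \<partial>lborel)"
proof -
  let ?a = "last_time L T"
  let ?e = "exp (- total_rate * (1 - ?a))"
  note borel_measurable_trunc_mass_fun_upd[measurable]
    borel_measurable_trunc_gain_fun_upd[OF valid_alg_alg1, measurable]
  have a: "0 \<le> ?a" "?a < 1"
    using last_time_bounds[OF L] by auto
  then have "0 \<le> ?e" "?e \<le> 1"
    using total_rate_pos by auto
  then have "ennreal k = ennreal (k * ?e) + ennreal (k * (1 - ?e))"
    using k by (simp flip: ennreal_plus add: algebra_simps)
  also have "ennreal (k * (1 - ?e)) =
      (\<integral>\<^sup>+ u. indicator {?a<..<1} u * ennreal (total_rate * exp (- total_rate * (u - ?a)) * k) \<partial>lborel)"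
    using a k total_rate_pos
    by (intro nn_integral_has_integral_interval[symmetric] has_integral_exp_tail) auto
  finally show ?thesis
    using k by (simp only: trunc_gain_Suc[OF valid_alg_alg1] alg1_hist fun_upd_same)
      (simp add: nn_integral_add add_ac)
qed

text \<open>Stated without subtraction, which \<^typ>\<open>ennreal\<close> lacks: the threshold rule falls short
  of \<^term>\<open>opt_value\<close> by at most k times the probability of N or more further arrivals.\<close>

lemma opt_value_le_trunc_gain_threshold:
  assumes k: "1 \<le> k"
  shows "ordered_times L T \<Longrightarrow> ennreal (opt_value k (last_time L T)) + ennreal k * trunc_mass N L T C \<le>
    trunc_gain (alg1 (threshold k)) k N L T C + ennreal k"
proof (induction N arbitrary: L T C)
  case 0
  then show ?case
    using opt_value_bounds[OF k, of "last_time L T"] last_time_bounds[of L T]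
    by (simp add: trunc_mass_def trunc_gain_def trunc_integral_def)
next
  case (Suc N)
  show ?case
    unfolding opt_value_add_trunc_mass_Suc[OF k Suc.prems]
      trunc_gain_threshold_add_Suc[OF k Suc.prems]
    by (intro add_left_mono nn_integral_mono threshold_rule_integrand_le k Suc.prems)
      (metis Suc.IH last_time_fun_upd)
qed

lemma expected_weight_le_opt_value:
  assumes "valid_alg alg" "1 \<le> k"
  shows "expected_weight k alg \<le> ennreal (opt_value k 0)"
  using trunc_gain_le_opt_value[OF assms ordered_times_0]
  unfolding expected_weight_eq_SUP[of k alg "\<lambda>_. 0" "\<lambda>_. False"]
  by (auto intro!: SUP_least simp: last_time_def)

lemma opt_value_le_expected_weight_threshold:
  assumes k: "1 \<le> k"
  shows "ennreal (opt_value k 0) \<le> expected_weight k (alg1 (threshold k))"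
proof -
  let ?E = "expected_weight k (alg1 (threshold k))"
  have "ennreal (opt_value k 0 + k * prob_fewer_arrivals N 0) \<le> ?E + ennreal k" for N
  proof -
    have "ennreal (opt_value k 0 + k * prob_fewer_arrivals N 0) =
        ennreal (opt_value k 0) + ennreal k * trunc_mass N 0 (\<lambda>_. 0) (\<lambda>_. False)"
      using k opt_value_bounds[OF k, of 0] prob_fewer_arrivals_nonneg[of 0 N]
      by (simp add: trunc_mass_eq ordered_times_0 last_time_def ennreal_mult ennreal_plus)
    also have "\<dots> \<le> trunc_gain (alg1 (threshold k)) k N 0 (\<lambda>_. 0) (\<lambda>_. False) + ennreal k"
      using opt_value_le_trunc_gain_threshold[OF k ordered_times_0] by (simp add: last_time_def)
    also have "\<dots> \<le> ?E + ennreal k"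
      unfolding expected_weight_eq_SUP[of k _ "\<lambda>_. 0" "\<lambda>_. False"] by (intro add_right_mono SUP_upper) auto
    finally show ?thesis .
  qed
  moreover have "(\<lambda>N. ennreal (opt_value k 0 + k * prob_fewer_arrivals N 0)) \<longlonglongrightarrow>
      ennreal (opt_value k 0 + k * 1)"
    by (intro tendsto_intros prob_fewer_arrivals_tendsto_1)
  ultimately have "ennreal (opt_value k 0 + k) \<le> ?E + ennreal k"
    by (intro LIMSEQ_le_const2) auto
  then show ?thesis
    using k opt_value_bounds[OF k, of 0] by (simp add: ennreal_plus add.commute ennreal_add_left_cancel_le)
qed

theorem lemma3p2:
  fixes k :: real
  assumes "k \<ge> 1"
  shows "\<exists>t1\<in>{0..1}. valid_alg (alg1 t1) \<and>
           (\<forall>alg. valid_alg alg \<longrightarrow> expected_weight k alg \<le> expected_weight k (alg1 t1))"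
proof (intro bexI conjI allI impI)
  show "threshold k \<in> {0..1}"
    using threshold_bounds[of k] assms by auto
  show "valid_alg (alg1 (threshold k))"
    by (rule valid_alg_alg1)
  fix alg
  assume "valid_alg alg"
  then show "expected_weight k alg \<le> expected_weight k (alg1 (threshold k))"
    using expected_weight_le_opt_value opt_value_le_expected_weight_threshold assms order_trans by blast
qed

end
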